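(* Let $G$ be a finite graph with $n$ vertices and let $I$ be a vertex of maximum degree in $\mathcal{I}^0_{\mathrm{AR}}(G)$ (this maximum degree equals $n$, so that the neighbours of $I$ are exactly the sets $I_x=I\triangle\{x\}$, $x\in V(G)$). Let $u,v$ be distinct vertices of $G$. Then $uv\notin E(G)$ if and only if $I_u$ and $I_v$ have a common neighbour $I'\neq I$ in $\mathcal{I}^0_{\mathrm{AR}}(G)$.
   Context: $\mathcal{I}^0_{\mathrm{AR}}(G)$ is the graph whose vertices are all independent sets of $G$ (including the empty set), two independent sets being adjacent iff their symmetric difference has exactly one element. $\triangle$ denotes symmetric difference. *)

theory Defs
  imports Main
begin

definition simple_graph :: "'a set \<Rightarrow> ('a \<Rightarrow> 'a \<Rightarrow> bool) \<Rightarrow> bool" where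
  "simple_graph V E \<longleftrightarrow> finite V \<and> (\<forall>x y. E x y \<longrightarrow> x \<in> V \<and> y \<in> V)
     \<and> (\<forall>x y. E x y \<longrightarrow> E y x) \<and> (\<forall>x. \<not> E x x)"

definition indep_set :: "'a set \<Rightarrow> ('a \<Rightarrow> 'a \<Rightarrow> bool) \<Rightarrow> 'a set \<Rightarrow> bool" where
  "indep_set V E S \<longleftrightarrow> S \<subseteq> V \<and> (\<forall>x\<in>S. \<forall>y\<in>S. \<not> E x y)"

definition ar_adj :: "'a set \<Rightarrow> 'a set \<Rightarrow> bool" where
  "ar_adj A B \<longleftrightarrow> card ((A - B) \<union> (B - A)) = 1"

definition ar_degree :: "'a set \<Rightarrow> ('a \<Rightarrow> 'a \<Rightarrow> bool) \<Rightarrow> 'a set \<Rightarrow> nat" where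
  "ar_degree V E I = card {J. indep_set V E J \<and> ar_adj I J}"

end

theory Submission
  imports Defs
begin

text \<open>The empty set is adjacent to all n singletons, and no independent set has more than n
  neighbours, so a vertex I of maximum degree has all n sets I \<triangle> {x} independent. Given
  u \<noteq> v, the only common neighbour of I \<triangle> {u} and I \<triangle> {v} other than I is
  I \<triangle> {u, v}. Its independence is equivalent to uv \<notin> E(G): in every case u and v
  lie together in one of I, I \<triangle> {u}, I \<triangle> {v}, I \<triangle> {u, v}, and any edge
  inside I \<triangle> {u, v} is either uv or lies inside I \<triangle> {u} or I \<triangle> {v}.\<close>

definition toggle :: "'a set \<Rightarrow> 'a \<Rightarrow> 'a set" where
  "toggle A x = sym_diff A {x}"

lemma toggle_toggle [simp]: "toggle (toggle A x) x = A"
  unfolding toggle_def by blast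

lemma inj_toggle: "inj (toggle A)"
proof (rule injI)
  fix x y assume "toggle A x = toggle A y"
  moreover have "\<And>z. sym_diff A (toggle A z) = {z}"
    unfolding toggle_def by blast
  ultimately show "x = y" by (metis singleton_inject)
qed

lemma ar_adj_iff_toggle: "ar_adj A B \<longleftrightarrow> (\<exists>x. B = toggle A x)"
proof -
  have "sym_diff A B = {x} \<longleftrightarrow> B = toggle A x" for x
    unfolding toggle_def by blast
  then show ?thesis
    unfolding ar_adj_def One_nat_def card_1_singleton_iff by simp
qed

lemma common_toggle_neighbour_iff:
  assumes "u \<noteq> v"
  shows "J \<noteq> A \<and> ar_adj J (toggle A u) \<and> ar_adj J (toggle A v)
    \<longleftrightarrow> J = toggle (toggle A u) v"
proof
  assume "J \<noteq> A \<and> ar_adj J (toggle A u) \<and> ar_adj J (toggle A v)"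
  then obtain a b where "J \<noteq> A" and a: "toggle A u = toggle J a" and b: "toggle A v = toggle J b"
    unfolding ar_adj_iff_toggle by blast
  from a have Ja: "J = toggle (toggle A u) a" by (metis toggle_toggle)
  from b have Jb: "J = toggle (toggle A v) b" by (metis toggle_toggle)
  have "b \<noteq> v" using Jb \<open>J \<noteq> A\<close> by auto
  then have "v \<in> J \<longleftrightarrow> v \<notin> A" using Jb unfolding toggle_def by auto
  moreover have "v \<in> J \<longleftrightarrow> (v \<in> A \<longleftrightarrow> v \<noteq> a)" using Ja assms unfolding toggle_def by auto
  ultimately have "a = v" by blast
  with Ja show "J = toggle (toggle A u) v" by simp
next
  assume J: "J = toggle (toggle A u) v"
  have "toggle A u = toggle J v" "toggle A v = toggle J u"
    using J unfolding toggle_def by blast+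
  moreover have "J \<noteq> A" using J assms unfolding toggle_def by blast
  ultimately show "J \<noteq> A \<and> ar_adj J (toggle A u) \<and> ar_adj J (toggle A v)"
    unfolding ar_adj_iff_toggle by blast
qed

lemma ar_degree_eq_card_toggles:
  assumes "J \<subseteq> V"
  shows "ar_degree V E J = card {x \<in> V. indep_set V E (toggle J x)}"
proof -
  have "{K. indep_set V E K \<and> ar_adj J K} = toggle J ` {x \<in> V. indep_set V E (toggle J x)}"
  proof (intro equalityI subsetI)
    fix K assume "K \<in> {K. indep_set V E K \<and> ar_adj J K}"
    then obtain x where K: "K = toggle J x" "indep_set V E K"
      by (auto simp: ar_adj_iff_toggle)
    then have "x \<in> V" using assms unfolding toggle_def indep_set_def by blast
    with K show "K \<in> toggle J ` {x \<in> V. indep_set V E (toggle J x)}" by blast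
  qed (auto simp: ar_adj_iff_toggle)
  then show ?thesis
    unfolding ar_degree_def by (simp add: card_image inj_on_subset[OF inj_toggle])
qed

lemma ar_degree_le_card:
  assumes "finite V" and "J \<subseteq> V"
  shows "ar_degree V E J \<le> card V"
  using assms by (simp add: ar_degree_eq_card_toggles card_mono)

lemma ar_degree_empty:
  assumes "simple_graph V E"
  shows "ar_degree V E {} = card V"
proof -
  have "indep_set V E (toggle {} x)" if "x \<in> V" for x
    using assms that unfolding simple_graph_def indep_set_def toggle_def by simp
  then show ?thesis by (simp add: ar_degree_eq_card_toggles cong: conj_cong)
qed

lemma ar_degree_eq_card_imp_indep_toggle:
  assumes "finite V" and "J \<subseteq> V" and "ar_degree V E J = card V" and "x \<in> V"
  shows "indep_set V E (toggle J x)"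
proof -
  have "{x \<in> V. indep_set V E (toggle J x)} = V"
    using assms(1-3) by (intro card_seteq) (auto simp: ar_degree_eq_card_toggles)
  with assms(4) show ?thesis by blast
qed

lemma indep_toggle_toggle_iff:
  assumes "simple_graph V E" and "u \<in> V" and "v \<in> V" and "u \<noteq> v"
    and "indep_set V E A" and "indep_set V E (toggle A u)" and "indep_set V E (toggle A v)"
  shows "indep_set V E (toggle (toggle A u) v) \<longleftrightarrow> \<not> E u v"
proof
  let ?B = "toggle (toggle A u) v"
  assume "indep_set V E ?B"
  moreover have "\<exists>S \<in> {A, toggle A u, toggle A v, ?B}. u \<in> S \<and> v \<in> S"
    using assms(4) unfolding toggle_def by auto
  ultimately show "\<not> E u v"
    using assms(5-7) unfolding indep_set_def by blast
next
  let ?B = "toggle (toggle A u) v"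
  assume "\<not> E u v"
  then have no_uv: "\<not> E x y" if "{x, y} = {u, v}" for x y
    using assms(1) that unfolding simple_graph_def by (metis doubleton_eq_iff)
  show "indep_set V E ?B" unfolding indep_set_def
  proof (intro conjI ballI)
    show "?B \<subseteq> V"
      using assms(2,3,5) unfolding indep_set_def toggle_def by blast
  next
    fix x y assume "x \<in> ?B" "y \<in> ?B"
    then consider "{x, y} \<subseteq> toggle A u" | "{x, y} \<subseteq> toggle A v" | "{x, y} = {u, v}"
      using assms(4) unfolding toggle_def by auto
    then show "\<not> E x y"
      by cases (use assms(6,7) no_uv in \<open>auto simp: indep_set_def\<close>)
  qed
qed

theorem lemma4p2:
  fixes V :: "'a set" and E :: "'a \<Rightarrow> 'a \<Rightarrow> bool" and I :: "'a set" and u v :: 'a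
  assumes "simple_graph V E"
    and "indep_set V E I"
    and "\<forall>J. indep_set V E J \<longrightarrow> ar_degree V E J \<le> ar_degree V E I"
    and "u \<in> V" and "v \<in> V" and "u \<noteq> v"
  shows "\<not> E u v \<longleftrightarrow>
    (\<exists>I'. indep_set V E I' \<and> I' \<noteq> I
        \<and> ar_adj I' ((I - {u}) \<union> ({u} - I)) \<and> ar_adj I' ((I - {v}) \<union> ({v} - I)))"
proof -
  have "finite V" using assms(1) unfolding simple_graph_def by blast
  have "I \<subseteq> V" using assms(2) unfolding indep_set_def by blast
  have "indep_set V E {}" unfolding indep_set_def by blast
  then have "card V \<le> ar_degree V E I"
    using assms(3) by (simp add: ar_degree_empty[OF assms(1), symmetric])
  then have "ar_degree V E I = card V"
    using ar_degree_le_card[OF \<open>finite V\<close> \<open>I \<subseteq> V\<close>, of E] by linarith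
  then have "indep_set V E (toggle I x)" if "x \<in> V" for x
    using ar_degree_eq_card_imp_indep_toggle[OF \<open>finite V\<close> \<open>I \<subseteq> V\<close>] that by blast
  then have "\<not> E u v \<longleftrightarrow> indep_set V E (toggle (toggle I u) v)"
    using indep_toggle_toggle_iff[OF assms(1,4,5,6,2)] assms(4,5) by blast
  also have "\<dots> \<longleftrightarrow> (\<exists>I'. indep_set V E I' \<and> I' \<noteq> I
      \<and> ar_adj I' (toggle I u) \<and> ar_adj I' (toggle I v))"
    by (simp add: common_toggle_neighbour_iff[OF assms(6)])
  finally show ?thesis unfolding toggle_def .
qed

end
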